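(* For every $r\ge2$, every eigenvalue $\lambda$ of $M^{(r)}_{++}$, $M^{(r)}_{+-}$ or $M^{(r)}_{--}$, and for every $r\ge0$ every eigenvalue $\lambda$ of $M^{(r)}_{-+}$, satisfies either $\lambda=0$ or $\lambda>\frac32-\sqrt2$ (all these eigenvalues are real).
   Context: Matrices: for $r\ge2$, $M^{(r)}_{++}=M^{(r)}_{+-}$ is the $r\times r$ tridiagonal matrix with first row $(\tfrac12,-1,0,\dots,0)$, rows $i=2,\dots,r-1$ having entries $-\tfrac12,\tfrac32,-1$ in columns $i-1,i,i+1$ (zeros elsewhere), and last row $(0,\dots,0,-1,2)$; $M^{(r)}_{--}$ is identical except that its first row is $(\tfrac32,-1,0,\dots,0)$. $M^{(0)}_{-+}=(1)$, and for $r\ge1$, $M^{(r)}_{-+}$ is the $(r+1)\times(r+1)$ tridiagonal matrix with first row $(1,-2,0,\dots,0)$, rows $i=2,\dots,r$ having entries $-\tfrac12,\tfrac32,-1$ in columns $i-1,i,i+1$, and last row $(0,\dots,0,-1,2)$. For example $M^{(2)}_{++}=\begin{pmatrix}\frac12&-1\\-1&2\end{pmatrix}$, $M^{(2)}_{--}=\begin{pmatrix}\frac32&-1\\-1&2\end{pmatrix}$, $M^{(1)}_{-+}=\begin{pmatrix}1&-2\\-1&2\end{pmatrix}$. *)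

theory Defs
  imports Complex_Main "Jordan_Normal_Form.Char_Poly"
begin

text \<open>Tridiagonal n x n matrix (0-based indices) with first row (a, b, 0, ...),
  middle rows (-1/2, 3/2, -1) around the diagonal, and last row (..., 0, -1, 2).
  Intended for n >= 2.\<close>
definition tri_mat :: "nat \<Rightarrow> real \<Rightarrow> real \<Rightarrow> real mat" where
  "tri_mat n a b = mat n n (\<lambda>(i, j).
     if i = 0 then (if j = 0 then a else if j = 1 then b else 0)
     else if i = n - 1 then (if j = n - 2 then -1 else if j = n - 1 then 2 else 0)
     else (if j + 1 = i then -1/2 else if j = i then 3/2 else if j = i + 1 then -1 else 0))"

definition M_pp :: "nat \<Rightarrow> real mat" where "M_pp r = tri_mat r (1/2) (-1)"
definition M_pm :: "nat \<Rightarrow> real mat" where "M_pm r = M_pp r"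
definition M_mm :: "nat \<Rightarrow> real mat" where "M_mm r = tri_mat r (3/2) (-1)"
definition M_mp :: "nat \<Rightarrow> real mat" where
  "M_mp r = (if r = 0 then mat 1 1 (\<lambda>_. 1) else tri_mat (r + 1) 1 (-2))"

text \<open>Eigenvalues are taken over the complex numbers.\<close>
abbreviation cplx_mat :: "real mat \<Rightarrow> complex mat" where
  "cplx_mat A \<equiv> map_mat complex_of_real A"

end

theory Submission
  imports Defs
begin

(* Each matrix in question is tri_mat n a b with n >= 2 and b < 0 (apart from the
   1 x 1 matrix M_mp 0, whose only eigenvalue is 1).  Such a matrix is similar to a symmetric
   one: a diagonal matrix of positive weights w symmetrises it (w i * T i j = w j * T j i), so
   every complex eigenvalue is real and has a real eigenvector x.
   Writing mu for the eigenvalue and s = 3/2 - mu, the last row and the interior rows of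
   T x = mu x say that, read backwards from x (n-1), the vector solves the recurrence
   p 0 = 1, p 1 = s + 1/2, p (k+2) = 2 s p (k+1) - 2 p k, scaled by x (n-1) <> 0.  The first
   row then becomes the characteristic equation a p (n-1) + b p (n-2) = mu p (n-1).
   If mu <= 3/2 - sqrt 2, i.e. s >= sqrt 2, an induction shows p k > 0, p (k+1) >= s p k, and
   p (k+1) - (s + 1/2) p k has the sign of s - 3/2.  For each of the three choices of the first
   row, these bounds are incompatible with the characteristic equation unless s = 3/2, i.e.
   mu = 0.  The file proves the general linear-algebra facts first, then the facts about
   tri_mat and the recurrence, and finally treats the three families. *)

section \<open>Real eigenvalues of symmetrisable real matrices\<close>

lemma eigenvalue_rows:
  assumes A: "A \<in> carrier_mat n n" and e: "eigenvalue (cplx_mat A) l"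
  shows "\<exists>v::nat \<Rightarrow> complex. (\<exists>i<n. v i \<noteq> 0) \<and>
     (\<forall>i<n. (\<Sum>j<n. complex_of_real (A $$ (i,j)) * v j) = l * v i)"
proof -
  from e obtain v where v: "v \<in> carrier_vec n" "v \<noteq> 0\<^sub>v n" "cplx_mat A *\<^sub>v v = l \<cdot>\<^sub>v v"
    using A unfolding eigenvalue_def eigenvector_def by auto
  have "\<exists>i<n. v $ i \<noteq> 0"
  proof (rule ccontr)
    assume "\<not> ?thesis"
    then have "v = 0\<^sub>v n" using v(1) by (intro eq_vecI) auto
    with v(2) show False by simp
  qed
  moreover have "(\<Sum>j<n. complex_of_real (A $$ (i,j)) * v $ j) = l * v $ i" if i: "i < n" for i
  proof -
    have "(cplx_mat A *\<^sub>v v) $ i = (l \<cdot>\<^sub>v v) $ i" using v(3) by simp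
    then show ?thesis using i A v(1) by (simp add: scalar_prod_def atLeast0LessThan)
  qed
  ultimately show ?thesis by blast
qed

text \<open>If positive weights symmetrise a real matrix, every complex eigenvalue is real: the
  weighted Hermitian form of an eigenvector equals both its conjugate and the eigenvalue times
  a positive number.\<close>
lemma symmetrisable_eigenvalue_real:
  fixes T :: "nat \<Rightarrow> nat \<Rightarrow> real" and w :: "nat \<Rightarrow> real" and v :: "nat \<Rightarrow> complex"
  assumes w_pos: "\<forall>i<n. w i > 0" and sym: "\<forall>i<n. \<forall>j<n. w i * T i j = w j * T j i"
    and nz: "\<exists>i<n. v i \<noteq> 0"
    and ev: "\<forall>i<n. (\<Sum>j<n. complex_of_real (T i j) * v j) = l * v i"
  shows "Im l = 0"
proof -
  define S where "S = (\<Sum>i<n. \<Sum>j<n. complex_of_real (w i * T i j) * cnj (v i) * v j)"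
  define N where "N = (\<Sum>i<n. w i * (cmod (v i))^2)"
  have "S = (\<Sum>i<n. complex_of_real (w i) * cnj (v i) * (\<Sum>j<n. complex_of_real (T i j) * v j))"
    unfolding S_def by (simp add: sum_distrib_left mult_ac)
  also have "\<dots> = (\<Sum>i<n. complex_of_real (w i) * cnj (v i) * (l * v i))"
    using ev by simp
  also have "\<dots> = l * (\<Sum>i<n. complex_of_real (w i * (cmod (v i))^2))"
    unfolding sum_distrib_left
    by (intro sum.cong refl) (simp add: complex_norm_square[symmetric] mult_ac)
  finally have S_eq: "S = l * complex_of_real N" unfolding N_def by simp
  have "cnj S = (\<Sum>i<n. \<Sum>j<n. complex_of_real (w i * T i j) * v i * cnj (v j))"
    unfolding S_def by simp
  also have "\<dots> = (\<Sum>j<n. \<Sum>i<n. complex_of_real (w i * T i j) * v i * cnj (v j))"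
    by (rule sum.swap)
  also have "\<dots> = S" unfolding S_def
    by (intro sum.cong refl) (use sym in \<open>simp add: mult_ac\<close>)
  finally have "cnj S = S" .
  then have "Im S = 0" by (metis Reals_cnj_iff complex_is_Real_iff)
  have N_pos: "N > 0"
  proof -
    from nz obtain k where k: "k < n" "v k \<noteq> 0" by blast
    have "w k * (cmod (v k))^2 \<le> N" unfolding N_def
      by (rule member_le_sum[where f="\<lambda>i. w i * (cmod (v i))^2"]) (use k w_pos in auto)
    moreover have "w k * (cmod (v k))^2 > 0" using k w_pos by auto
    ultimately show ?thesis by linarith
  qed
  from \<open>Im S = 0\<close> have "Im l * N = 0" using S_eq by simp
  then show ?thesis using N_pos by simp
qed

text \<open>A real eigenvalue of a real matrix has a real eigenvector (the real or the imaginary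
  part of a complex one).\<close>
lemma real_eigenvector:
  fixes v :: "nat \<Rightarrow> complex" and T :: "nat \<Rightarrow> nat \<Rightarrow> real"
  assumes ev: "\<forall>i<n. (\<Sum>j<n. complex_of_real (T i j) * v j) = complex_of_real \<mu> * v i"
    and nz: "\<exists>i<n. v i \<noteq> 0"
  shows "\<exists>x::nat \<Rightarrow> real. (\<exists>i<n. x i \<noteq> 0) \<and> (\<forall>i<n. (\<Sum>j<n. T i j * x j) = \<mu> * x i)"
proof -
  have re: "(\<Sum>j<n. T i j * Re (v j)) = \<mu> * Re (v i)"
    and im: "(\<Sum>j<n. T i j * Im (v j)) = \<mu> * Im (v i)" if "i < n" for i
    using arg_cong[OF ev[rule_format, OF that], of Re] arg_cong[OF ev[rule_format, OF that], of Im]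
    by (simp_all add: Re_sum Im_sum)
  from nz obtain k where "k < n" "v k \<noteq> 0" by blast
  then have "Re (v k) \<noteq> 0 \<or> Im (v k) \<noteq> 0" using complex_eqI[of "v k" 0] by auto
  then show ?thesis
  proof
    assume "Re (v k) \<noteq> 0"
    then show ?thesis using re \<open>k < n\<close> by (intro exI[of _ "\<lambda>i. Re (v i)"]) blast
  next
    assume "Im (v k) \<noteq> 0"
    then show ?thesis using im \<open>k < n\<close> by (intro exI[of _ "\<lambda>i. Im (v i)"]) blast
  qed
qed

lemma symmetrisable_real_eigenpair:
  assumes A: "A \<in> carrier_mat n n" and w_pos: "\<forall>i<n. w i > 0"
    and sym: "\<forall>i<n. \<forall>j<n. w i * A $$ (i,j) = w j * A $$ (j,i)"
    and e: "eigenvalue (cplx_mat A) l"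
  shows "\<exists>\<mu> x. l = complex_of_real \<mu> \<and> (\<exists>i<n. x i \<noteq> 0) \<and>
           (\<forall>i<n. (\<Sum>j<n. A $$ (i,j) * x j) = \<mu> * x i)"
proof -
  obtain v where nz: "\<exists>i<n. v i \<noteq> 0"
    and ev: "\<forall>i<n. (\<Sum>j<n. complex_of_real (A $$ (i,j)) * v j) = l * v i"
    using eigenvalue_rows[OF A e] by blast
  have "Im l = 0"
    using symmetrisable_eigenvalue_real[where T="\<lambda>i j. A $$ (i,j)", OF w_pos sym nz ev] .
  then have l: "l = complex_of_real (Re l)" by (simp add: complex_eqI)
  then obtain x where "\<exists>i<n. x i \<noteq> 0" "\<forall>i<n. (\<Sum>j<n. A $$ (i,j) * x j) = Re l * x i"
    using real_eigenvector[where T="\<lambda>i j. A $$ (i,j)", of n v "Re l"] ev nz by auto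
  with l show ?thesis by blast
qed

text \<open>Weights symmetrising tri_mat n a b when b < 0: weight 1 on the first index, -b on the
  second, doubling along the interior and constant on the last step.\<close>
definition tri_weight :: "nat \<Rightarrow> real \<Rightarrow> nat \<Rightarrow> real" where
  "tri_weight n b i = (if i = 0 then 1 else -b * 2 ^ min i (n - 2))"

lemma tri_weight_pos: "b < 0 \<Longrightarrow> tri_weight n b i > 0"
  by (simp add: tri_weight_def mult_neg_pos)

lemma tri_mat_entry:
  assumes "i < n" "j < n"
  shows "tri_mat n a b $$ (i,j) =
     (if i = 0 then (if j = 0 then a else if j = 1 then b else 0)
      else if i = n - 1 then (if j = n - 2 then -1 else if j = n - 1 then 2 else 0)
      else (if j + 1 = i then -1/2 else if j = i then 3/2 else if j = i + 1 then -1 else 0))"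
  using assms by (simp add: tri_mat_def)

lemma tri_mat_entry_far:
  assumes "i < n" "j < n" "j > i + 1 \<or> i > j + 1"
  shows "tri_mat n a b $$ (i,j) = 0"
proof -
  have "j \<noteq> i" "j + 1 \<noteq> i" "j \<noteq> i + 1" using assms(3) by auto
  moreover have "i = 0 \<Longrightarrow> j \<noteq> 0 \<and> j \<noteq> 1" "i = n - 1 \<Longrightarrow> j \<noteq> n - 2 \<and> j \<noteq> n - 1"
    using assms by auto
  ultimately show ?thesis using assms(1,2) by (simp add: tri_mat_entry)
qed

lemma tri_weight_symmetric_adjacent:
  assumes "n \<ge> 2" "i + 1 < n"
  shows "tri_weight n b i * tri_mat n a b $$ (i, i+1) = tri_weight n b (i+1) * tri_mat n a b $$ (i+1, i)"
  using assms by (cases "i = 0"; cases "i + 2 = n") (auto simp: tri_weight_def tri_mat_entry min_def)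

lemma tri_weight_symmetric:
  assumes n: "n \<ge> 2" and "i < n" "j < n"
  shows "tri_weight n b i * tri_mat n a b $$ (i,j) = tri_weight n b j * tri_mat n a b $$ (j,i)"
proof -
  consider "i = j" | "j = i + 1" | "i = j + 1" | "j > i + 1 \<or> i > j + 1" by linarith
  then show ?thesis
  proof cases
    case 2 then show ?thesis using tri_weight_symmetric_adjacent[OF n] assms by simp
  next
    case 3 then show ?thesis using tri_weight_symmetric_adjacent[OF n, of j] assms by simp
  next
    case 4
    then have "tri_mat n a b $$ (i,j) = 0" "tri_mat n a b $$ (j,i) = 0"
      using tri_mat_entry_far[of i n j] tri_mat_entry_far[of j n i] assms by auto
    then show ?thesis by simp
  qed simp
qed

lemma tri_mat_row:
  assumes n: "n \<ge> 2" and i: "i < n"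
  shows "(\<Sum>j<n. tri_mat n a b $$ (i,j) * x j) =
    (if i = 0 then a * x 0 + b * x 1 else if i = n - 1 then - x (n-2) + 2 * x (n-1)
     else -1/2 * x (i-1) + 3/2 * x i - x (i+1))"
proof -
  let ?f = "\<lambda>j. tri_mat n a b $$ (i,j) * x j"
  have restrict: "(\<Sum>j<n. ?f j) = sum ?f J" if "J \<subseteq> {..<n}" "\<forall>j<n. j \<notin> J \<longrightarrow> ?f j = 0" for J
    using that by (intro sum.mono_neutral_right) auto
  consider "i = 0" | "i = n - 1" | "i \<noteq> 0" "i \<noteq> n - 1" by blast
  then show ?thesis
  proof cases
    case 1
    then show ?thesis using restrict[of "{0,1}"] n by (simp add: tri_mat_entry)
  next
    case 2
    moreover have "n - 1 \<noteq> n - 2" "n - 2 < n" using n by auto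
    ultimately show ?thesis using restrict[of "{n-2,n-1}"] n by (simp add: tri_mat_entry)
  next
    case 3
    have "(\<Sum>j<n. ?f j) = (\<Sum>j\<in>{i-1,i,i+1}. ?f j)"
      by (rule restrict) (use i 3 in \<open>auto simp: tri_mat_entry\<close>)
    moreover have "Suc (i - 1) = i" "i - 1 \<noteq> i" "i - 1 \<noteq> Suc i" "Suc i < n" using 3 i by auto
    ultimately show ?thesis using 3 i by (simp add: tri_mat_entry)
  qed
qed

section \<open>The backward recurrence\<close>

text \<open>An eigenvector of tri_mat with eigenvalue 3/2 - s, read backwards from its last entry and
  normalised so that this entry is 1.\<close>
fun back_seq :: "real \<Rightarrow> nat \<Rightarrow> real" where
  "back_seq s 0 = 1"
| "back_seq s (Suc 0) = s + 1/2"
| "back_seq s (Suc (Suc k)) = 2 * s * back_seq s (Suc k) - 2 * back_seq s k"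

lemma eigenvector_back_seq:
  fixes x :: "nat \<Rightarrow> real"
  assumes last: "x (n-2) = (s + 1/2) * x (n-1)"
    and interior: "\<forall>i. 1 \<le> i \<and> i \<le> n-2 \<longrightarrow> x (i-1) = 2*s*x i - 2 * x (i+1)"
  shows "k \<le> n - 1 \<Longrightarrow> x (n-1-k) = x (n-1) * back_seq s k"
proof (induction k rule: induct_nat_012)
  case 1
  then show ?case using last by (simp add: diff_diff_add numeral_2_eq_2 mult.commute)
next
  case (ge2 k)
  define i where "i = n - 2 - k"
  have i: "1 \<le> i" "i \<le> n - 2" "i - 1 = n - 1 - Suc (Suc k)" "i = n - 1 - Suc k" "i + 1 = n - 1 - k"
    using ge2.prems unfolding i_def by auto
  show ?case
    using interior[rule_format, of i] i ge2.IH ge2.prems by (simp add: algebra_simps)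
qed simp

text \<open>One step of the recurrence preserves the invariant of back_seq_bounds.\<close>
lemma back_step:
  fixes s u v :: real
  assumes s: "s^2 \<ge> 2" "s > 0" and u: "u > 0" and lower: "v \<ge> s * u"
    and side: "(s - 3/2) * (v - (s + 1/2) * u) \<ge> 0"
  shows "v > 0" "2*s*v - 2*u \<ge> s * v" "(s - 3/2) * ((2*s*v - 2*u) - (s + 1/2) * v) \<ge> 0"
proof -
  show v: "v > 0" using lower u s(2) by (smt (verit) mult_pos_pos)
  have "s * ((2*s*v - 2*u) - s * v) = (s^2 - 2) * v + 2 * (v - s * u)"
    by (simp add: algebra_simps power2_eq_square)
  also have "\<dots> \<ge> 0" using s(1) v lower by simp
  finally show "2*s*v - 2*u \<ge> s * v" using s(2) by (simp add: zero_le_mult_iff)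
  have "(s + 1/2) * ((s - 3/2) * ((2*s*v - 2*u) - (s + 1/2) * v))
      = (s - 3/2)^2 * (s + 3/2) * v + 2 * ((s - 3/2) * (v - (s + 1/2) * u))"
    by (simp add: field_simps power2_eq_square)
  also have "\<dots> \<ge> 0" using side v s(2) by simp
  finally show "(s - 3/2) * ((2*s*v - 2*u) - (s + 1/2) * v) \<ge> 0"
    using s(2) by (simp add: zero_le_mult_iff)
qed

lemma back_seq_bounds:
  assumes s: "s^2 \<ge> 2" "s > 0"
  shows "back_seq s k > 0 \<and> back_seq s (Suc k) \<ge> s * back_seq s k
    \<and> (s - 3/2) * (back_seq s (Suc k) - (s + 1/2) * back_seq s k) \<ge> 0"
proof (induction k)
  case (Suc k)
  then show ?case using back_step[OF s, of "back_seq s k" "back_seq s (Suc k)"] by simp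
qed simp

lemma tri_eigenvalue_characteristic:
  assumes n: "n \<ge> 2" and b: "b < 0" and e: "eigenvalue (cplx_mat (tri_mat n a b)) l"
  shows "\<exists>\<mu>. l = complex_of_real \<mu> \<and>
    a * back_seq (3/2 - \<mu>) (n-1) + b * back_seq (3/2 - \<mu>) (n-2) = \<mu> * back_seq (3/2 - \<mu>) (n-1)"
proof -
  have carrier: "tri_mat n a b \<in> carrier_mat n n" by (simp add: tri_mat_def)
  obtain \<mu> x where l: "l = complex_of_real \<mu>" and nz: "\<exists>i<n. x i \<noteq> 0"
    and rows: "\<forall>i<n. (\<Sum>j<n. tri_mat n a b $$ (i,j) * x j) = \<mu> * x i"
  proof -
    have "\<forall>i<n. tri_weight n b i > 0" using tri_weight_pos[OF b] by blast
    moreover have "\<forall>i<n. \<forall>j<n. tri_weight n b i * tri_mat n a b $$ (i,j)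
                                = tri_weight n b j * tri_mat n a b $$ (j,i)"
      using tri_weight_symmetric[OF n] by blast
    ultimately show ?thesis
      using symmetrisable_real_eigenpair[OF carrier _ _ e] that by blast
  qed
  define s where "s = 3/2 - \<mu>"
  define p where "p = back_seq s"
  have row: "(if i = 0 then a * x 0 + b * x 1 else if i = n - 1 then - x (n-2) + 2 * x (n-1)
     else -1/2 * x (i-1) + 3/2 * x i - x (i+1)) = \<mu> * x i" if "i < n" for i
    using rows tri_mat_row[OF n that, of a b x] that by simp
  have first: "a * x 0 + b * x 1 = \<mu> * x 0" using row[of 0] n by simp
  have "x (n-2) = (s + 1/2) * x (n-1)"
    using row[of "n-1"] n unfolding s_def by (simp add: algebra_simps)
  moreover have "x (i-1) = 2*s*x i - 2 * x (i+1)" if "1 \<le> i \<and> i \<le> n-2" for i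
  proof -
    have "i < n" "i \<noteq> 0" "i \<noteq> n - 1" using that n by auto
    then show ?thesis using row[of i] unfolding s_def by (simp add: algebra_simps)
  qed
  ultimately have x: "x (n-1-k) = x (n-1) * p k" if "k \<le> n - 1" for k
    using eigenvector_back_seq that unfolding p_def by blast
  have x_last: "x (n-1) \<noteq> 0"
  proof
    assume "x (n-1) = 0"
    then have "x i = 0" if "i < n" for i using x[of "n-1-i"] that by simp
    with nz show False by blast
  qed
  have "x 0 = x (n-1) * p (n-1)" "x 1 = x (n-1) * p (n-2)"
    using x[of "n-1"] x[of "n-2"] n by (simp_all add: numeral_2_eq_2 Suc_diff_Suc)
  with first have "x (n-1) * (a * p (n-1) + b * p (n-2)) = x (n-1) * (\<mu> * p (n-1))"
    by (simp add: algebra_simps)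
  then have "a * p (n-1) + b * p (n-2) = \<mu> * p (n-1)"
    using x_last by simp
  with l show ?thesis unfolding p_def s_def by blast
qed

lemma tri_eigenvalue_bound:
  assumes n: "n \<ge> 2" and b: "b < 0" and e: "eigenvalue (cplx_mat (tri_mat n a b)) l"
    and boundary: "\<And>s y0 y1. s^2 \<ge> 2 \<Longrightarrow> s > 0 \<Longrightarrow> y1 > 0 \<Longrightarrow> y0 \<ge> s * y1 \<Longrightarrow>
       (s - 3/2) * (y0 - (s + 1/2) * y1) \<ge> 0 \<Longrightarrow> a * y0 + b * y1 = (3/2 - s) * y0 \<Longrightarrow> s = 3/2"
  shows "l \<in> \<real> \<and> (l = 0 \<or> Re l > 3/2 - sqrt 2)"
proof -
  obtain \<mu> where l: "l = complex_of_real \<mu>" and char: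
    "a * back_seq (3/2 - \<mu>) (n-1) + b * back_seq (3/2 - \<mu>) (n-2) = \<mu> * back_seq (3/2 - \<mu>) (n-1)"
    using tri_eigenvalue_characteristic[OF n b e] by blast
  have "\<mu> = 0" if small: "\<mu> \<le> 3/2 - sqrt 2"
  proof -
    define s where "s = 3/2 - \<mu>"
    have s_ge: "sqrt 2 \<le> s" using small unfolding s_def by simp
    have "0 < sqrt (2::real)" by simp
    then have s: "s^2 \<ge> 2" "s > 0"
      using power_mono[OF s_ge, of 2] s_ge by (simp, linarith)
    have "Suc (n-2) = n-1" using n by simp
    then have "s = 3/2"
      using boundary[OF s] back_seq_bounds[OF s, of "n-2"] char unfolding s_def by auto
    then show ?thesis unfolding s_def by simp
  qed
  then show ?thesis using l by force
qed

text \<open>If (s - 3/2) z is both nonnegative and minus a positive multiple of (s - 3/2)^2, then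
  s = 3/2.  This is how the characteristic equation fails for M_pp and M_mp unless mu = 0.\<close>
lemma forced_balance:
  fixes s z c :: real
  assumes "(s - 3/2) * z \<ge> 0" and "(s - 3/2) * z = - ((s - 3/2)^2 * c)" and "c > 0"
  shows "s = 3/2"
proof -
  have "(s - 3/2)^2 * c \<le> 0" using assms(1,2) by simp
  then have "(s - 3/2)^2 \<le> 0" using assms(3) by (simp add: mult_le_0_iff)
  then show ?thesis by simp
qed

lemma pp_boundary:
  fixes s y0 y1 :: real
  assumes "s > 0" "y1 > 0" "y0 \<ge> s * y1" and side: "(s - 3/2) * (y0 - (s + 1/2) * y1) \<ge> 0"
    and char: "1/2 * y0 + -1 * y1 = (3/2 - s) * y0"
  shows "s = 3/2"
proof (rule forced_balance[OF side])
  have y1: "y1 = (s - 1) * y0" using char by (simp add: algebra_simps)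
  show "(s - 3/2) * (y0 - (s + 1/2) * y1) = - ((s - 3/2)^2 * ((s + 1) * y0))"
    unfolding y1 by (simp add: field_simps power2_eq_square)
  have "y0 > 0" using assms(1-3) by (smt (verit) mult_pos_pos)
  then show "(s + 1) * y0 > 0" using assms(1) by simp
qed

lemma mp_boundary:
  fixes s y0 y1 :: real
  assumes "s > 0" "y1 > 0" "y0 \<ge> s * y1" and side: "(s - 3/2) * (y0 - (s + 1/2) * y1) \<ge> 0"
    and char: "1 * y0 + -2 * y1 = (3/2 - s) * y0"
  shows "s = 3/2"
proof (rule forced_balance[OF side])
  have y1: "y1 = (s - 1/2) / 2 * y0" using char by (simp add: algebra_simps)
  show "(s - 3/2) * (y0 - (s + 1/2) * y1) = - ((s - 3/2)^2 * ((s + 3/2) / 2 * y0))"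
    unfolding y1 by (simp add: field_simps power2_eq_square)
  have "y0 > 0" using assms(1-3) by (smt (verit) mult_pos_pos)
  then show "(s + 3/2) / 2 * y0 > 0" using assms(1) by simp
qed

text \<open>First row (3/2, -1): the characteristic equation forces y1 = s y0, which contradicts
  y0 >= s y1 since s^2 >= 2; so M_mm has no eigenvalue at most 3/2 - sqrt 2 at all.\<close>
lemma mm_boundary:
  fixes s y0 y1 :: real
  assumes s: "s^2 \<ge> 2" "s > 0" and "y1 > 0" "y0 \<ge> s * y1"
    and char: "3/2 * y0 + -1 * y1 = (3/2 - s) * y0"
  shows False
proof -
  have y1: "y1 = s * y0" using char by (simp add: algebra_simps)
  have "y0 > 0" using assms(2-4) by (smt (verit) mult_pos_pos)
  have "2 * y0 \<le> s^2 * y0" using s(1) \<open>y0 > 0\<close> by simp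
  also have "\<dots> = s * y1" unfolding y1 by (simp add: power2_eq_square)
  also have "\<dots> \<le> y0" by fact
  finally show False using \<open>y0 > 0\<close> by simp
qed

lemma M_pp_eigenvalue:
  assumes "r \<ge> 2" "eigenvalue (cplx_mat (M_pp r)) l"
  shows "l \<in> \<real> \<and> (l = 0 \<or> Re l > 3/2 - sqrt 2)"
  using assms pp_boundary unfolding M_pp_def by (intro tri_eigenvalue_bound) auto

lemma M_mm_eigenvalue:
  assumes "r \<ge> 2" "eigenvalue (cplx_mat (M_mm r)) l"
  shows "l \<in> \<real> \<and> (l = 0 \<or> Re l > 3/2 - sqrt 2)"
proof (rule tri_eigenvalue_bound[of r "-1" "3/2"])
  fix s y0 y1 :: real
  assume "s^2 \<ge> 2" "s > 0" "y1 > 0" "y0 \<ge> s * y1" "3/2 * y0 + -1 * y1 = (3/2 - s) * y0"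
  with mm_boundary show "s = 3/2" by blast
qed (use assms in \<open>simp_all add: M_mm_def\<close>)

lemma M_mp_eigenvalue:
  assumes e: "eigenvalue (cplx_mat (M_mp r)) l"
  shows "l \<in> \<real> \<and> (l = 0 \<or> Re l > 3/2 - sqrt 2)"
proof (cases "r = 0")
  case True
  have carrier: "mat 1 1 (\<lambda>_. 1) \<in> carrier_mat 1 1" by simp
  obtain v :: "nat \<Rightarrow> complex" where "v 0 \<noteq> 0" "v 0 = l * v 0"
    using eigenvalue_rows[OF carrier] e True unfolding M_mp_def by auto
  then have "l = 1" by (metis mult_cancel_right1)
  moreover have "1 < sqrt (2::real)" by (rule real_less_rsqrt) simp
  then have "3/2 - sqrt 2 < (1::real)" by linarith
  ultimately show ?thesis by simp
next
  case False
  then show ?thesis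
    using e mp_boundary unfolding M_mp_def by (intro tri_eigenvalue_bound[of "r+1" "-2" 1]) auto
qed

theorem mainTheorem13:
  shows "(\<forall>r \<ge> 2. \<forall>l::complex.
            (eigenvalue (cplx_mat (M_pp r)) l \<or> eigenvalue (cplx_mat (M_pm r)) l
             \<or> eigenvalue (cplx_mat (M_mm r)) l) \<longrightarrow>
            l \<in> \<real> \<and> (l = 0 \<or> Re l > 3/2 - sqrt 2))
       \<and> (\<forall>r. \<forall>l::complex. eigenvalue (cplx_mat (M_mp r)) l \<longrightarrow>
            l \<in> \<real> \<and> (l = 0 \<or> Re l > 3/2 - sqrt 2))"
  using M_pp_eigenvalue M_mm_eigenvalue M_mp_eigenvalue by (auto simp: M_pm_def)

end
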